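(* Let $m\ge n$, $1\le r\le n$, $\delta=r/n$, $\mu\in[0,1)$, $\tau\in\mathbb{Z}_{\ge1}$, $\eta>0$, and suppose Assumption (A3) holds. Then the momentum iterates $\bm m_t$ of PowerSGD+ with MSGD satisfy, for every $t\ge0$, $$\mathbb{E}\|\bm m_t\|_F^2\le\frac{92\tau^2G^2}{(1-\mu)^2\delta^2}.$$
   Context: Setting: $N$ nodes jointly minimize $f(\bm{X})=\frac1N\sum_{i=1}^N f_i(\bm{X})$ over $\bm{X}\in\mathbb{R}^{m\times n}$, where $f_i(\bm{X})=\mathbb{E}_{\xi^{(i)}\sim\mathcal{D}_i}[F(\bm{X};\xi^{(i)})]$; node $i$ queries stochastic gradients $\nabla F(\bm{X};\xi^{(i)})$, sampled independently across nodes and iterations. Assumption (A3): $\|\nabla f(\bm{X})\|_F^2\le\omega^2$ for all $\bm X$, and $\mathbb{E}\|\frac1N\sum_{i=1}^N\nabla F(\bm{X};\xi^{(i)})\|_F^2\le G^2:=\sigma^2+\omega^2$ for all $\bm X$, where $\sigma^2$ bounds the variance $\mathbb{E}\|\nabla F(\bm{X};\xi^{(i)})-\nabla f_i(\bm{X})\|_F^2$ for all $i$ and $\bm X$. $\mathrm{QR}(\bm A)$, for $\bm A\in\mathbb{R}^{m\times r}$, denotes the factor $\bm Q\in\mathbb{R}^{m\times r}$ with $\bm Q^\top\bm Q=I_r$ of an economic QR decomposition $\bm A=\bm Q\bm R$. PowerSGD+ with MSGD (step size $\eta$, momentum $\mu$, restart period $\tau$, rank $r$): initialize $\bm X_0$,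 $\bm Q_{-1}\in\mathbb{R}^{n\times r}$, $\bm m_{-1}=0$, $\bm e_0^{(i)}=0$. For $t=0,1,\dots$: each node computes $\bm g_t^{(i)}=\nabla F(\bm X_t;\xi_t^{(i)})$ and $\bm\Delta_t^{(i)}=\bm g_t^{(i)}+\bm e_t^{(i)}$; let $\bm\Delta_t=\frac1N\sum_i\bm\Delta_t^{(i)}$. If $t\not\equiv0\pmod\tau$: $\tilde{\bm P}_t=\mathrm{QR}\big(\frac1N\sum_i\bm\Delta_t^{(i)}\bm Q_{t-1}\big)$; if $t\equiv0\pmod\tau$: $\tilde{\bm P}_t$ is the matrix of the top-$r$ left singular vectors of $\bm\Delta_t$. In both cases $\bm Q_t=\frac1N\sum_i(\bm\Delta_t^{(i)})^\top\tilde{\bm P}_t$, $\widehat{\bm\Delta}_t^{(i)}=\tilde{\bm P}_t\tilde{\bm P}_t^\top\bm\Delta_t^{(i)}$, $\widehat{\bm\Delta}_t=\tilde{\bm P}_t\bm Q_t^\top$, $\bm e_{t+1}^{(i)}=\bm\Delta_t^{(i)}-\widehat{\bm\Delta}_t^{(i)}$, $\bm m_t=\mu\bm m_{t-1}+\widehat{\bm\Delta}_t$, $\bm X_{t+1}=\bm X_t-\eta\bm m_t$. *)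

theory Defs
  imports "HOL-Analysis.Analysis" "HOL-Probability.Probability"
begin

text \<open>Matrices in R^{a x b} are represented as real^'b^'a (rows indexed by 'a).
  The library norm on this type is the Frobenius norm and the inner product is the
  Frobenius inner product.\<close>

definition is_QR_factor :: "real^('r::{finite,linorder})^'m \<Rightarrow> real^('r::{finite,linorder})^'m \<Rightarrow> bool" where
  "is_QR_factor A Q \<longleftrightarrow> transpose Q ** Q = mat 1 \<and>
     (\<exists>R :: real^('r::{finite,linorder})^('r::{finite,linorder}). (\<forall>i j. j < i \<longrightarrow> R $ i $ j = 0) \<and> A = Q ** R)"

definition is_top_left_sv :: "real^'n^'m \<Rightarrow> real^'r^'m \<Rightarrow> bool" where
  "is_top_left_sv D P \<longleftrightarrow>
     (\<exists>(U :: real^'n^'m) (V :: real^'n^'n) (s :: 'n \<Rightarrow> real) (emb :: 'r \<Rightarrow> 'n).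
        transpose U ** U = mat 1 \<and> transpose V ** V = mat 1 \<and> V ** transpose V = mat 1 \<and>
        (\<forall>k. 0 \<le> s k) \<and>
        D = U ** (\<chi> i j. if i = j then s i else 0) ** transpose V \<and>
        inj emb \<and> (\<forall>a j. P $ a $ j = U $ a $ emb j) \<and>
        (\<forall>j k. k \<notin> range emb \<longrightarrow> s k \<le> s (emb j)))"

text \<open>One iteration of PowerSGD+ with MSGD.  State before iteration t:
  (X_t, Q_{t-1}, m_{t-1}, e_t^{(.)}).  z i is the sample xi_t^{(i)} of node i.\<close>
definition psgd_step ::
  "(real^'r^'m \<Rightarrow> real^'r^'m) \<Rightarrow> (real^'n^'m \<Rightarrow> real^'r^'m) \<Rightarrow>
   (real^'n^'m \<Rightarrow> 'xi \<Rightarrow> real^'n^'m) \<Rightarrow> nat \<Rightarrow> real \<Rightarrow> real \<Rightarrow> nat \<Rightarrow>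
   nat \<Rightarrow> (nat \<Rightarrow> 'xi) \<Rightarrow>
   (real^'n^'m) \<times> (real^'r^'n) \<times> (real^'n^'m) \<times> (nat \<Rightarrow> real^'n^'m) \<Rightarrow>
   (real^'n^'m) \<times> (real^'r^'n) \<times> (real^'n^'m) \<times> (nat \<Rightarrow> real^'n^'m)" where
  "psgd_step qrsel svsel gradF N \<eta> \<mu> \<tau> t z st =
     (case st of (X, Qp, mp, e) \<Rightarrow>
       let g = (\<lambda>i. gradF X (z i));
           Di = (\<lambda>i. g i + e i);
           Dlt = (1 / real N) *\<^sub>R (\<Sum>i<N. Di i);
           P = (if t mod \<tau> \<noteq> 0 then qrsel ((1 / real N) *\<^sub>R (\<Sum>i<N. Di i ** Qp))
                else svsel Dlt);
           Q = (1 / real N) *\<^sub>R (\<Sum>i<N. transpose (Di i) ** P);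
           Dhi = (\<lambda>i. P ** transpose P ** Di i);
           Dh = P ** transpose Q;
           e' = (\<lambda>i. Di i - Dhi i);
           m = \<mu> *\<^sub>R mp + Dh;
           X' = X - \<eta> *\<^sub>R m
       in (X', Q, m, e'))"

text \<open>State before iteration t along a sample path xi (xi t i = xi_t^{(i)}).\<close>
fun psgd_state ::
  "(real^'r^'m \<Rightarrow> real^'r^'m) \<Rightarrow> (real^'n^'m \<Rightarrow> real^'r^'m) \<Rightarrow>
   (real^'n^'m \<Rightarrow> 'xi \<Rightarrow> real^'n^'m) \<Rightarrow> nat \<Rightarrow> real \<Rightarrow> real \<Rightarrow> nat \<Rightarrow>
   real^'n^'m \<Rightarrow> real^'r^'n \<Rightarrow> (nat \<Rightarrow> nat \<Rightarrow> 'xi) \<Rightarrow> nat \<Rightarrow>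
   (real^'n^'m) \<times> (real^'r^'n) \<times> (real^'n^'m) \<times> (nat \<Rightarrow> real^'n^'m)" where
  "psgd_state qrsel svsel gradF N \<eta> \<mu> \<tau> X0 Q0 xi 0 = (X0, Q0, 0, (\<lambda>_. 0))"
| "psgd_state qrsel svsel gradF N \<eta> \<mu> \<tau> X0 Q0 xi (Suc t) =
     psgd_step qrsel svsel gradF N \<eta> \<mu> \<tau> t (xi t)
       (psgd_state qrsel svsel gradF N \<eta> \<mu> \<tau> X0 Q0 xi t)"

definition psgd_mom where
  "psgd_mom qrsel svsel gradF N \<eta> \<mu> \<tau> X0 Q0 xi t =
     fst (snd (snd (psgd_state qrsel svsel gradF N \<eta> \<mu> \<tau> X0 Q0 xi (Suc t))))"

end

theory Submission
  imports Defs
begin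

(*
  Write g_t and e_t for the node averages of the stochastic gradients and of the error-feedback
  memories, and D_t = g_t + e_t.  Every step replaces D_t by its orthogonal projection onto the
  span of the orthonormal factor P_t, so that
    |e_(t+1)| <= rho_t (|g_t| + |e_t|)   and   |m_t| <= mu |m_(t-1)| + |g_t| + |e_t|,
  where rho_t = 1 after a power-iteration step and rho_t = 1 - delta/2 at a restart: the top-r
  left singular vectors capture at least the fraction delta = r/n of |D_t|^2.  Unrolling these
  recursions bounds |m_t| by a weighted sum of the |g_k| whose deterministic weights have total
  mass at most 2 tau / (delta (1 - mu)), and Cauchy-Schwarz turns this into a bound on |m_t|^2
  by a weighted sum of the |g_k|^2.  The iterate X_k depends only on the samples drawn before
  step k, which are independent of those drawn at step k, so E |g_k|^2 <= G^2.
*)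

lemma inner_matrix: "A \<bullet> B = (\<Sum>i\<in>UNIV. \<Sum>j\<in>UNIV. A$i$j * B$i$j :: real)"
  by (simp add: inner_vec_def)

lemma norm_sq_matrix: "(norm (A :: real^'n^'m))\<^sup>2 = (\<Sum>i\<in>UNIV. \<Sum>j\<in>UNIV. (A$i$j)\<^sup>2)"
  unfolding power2_norm_eq_inner inner_matrix by (simp add: power2_eq_square)

lemma inner_matrix_mult_left:
  fixes A :: "real^'k^'m" and B :: "real^'n^'k" and C :: "real^'n^'m"
  shows "(A ** B) \<bullet> C = B \<bullet> (transpose A ** C)"
proof -
  have "(A ** B) \<bullet> C = (\<Sum>i\<in>UNIV. \<Sum>j\<in>UNIV. \<Sum>k\<in>UNIV. A$i$k * B$k$j * C$i$j)"
    by (simp add: inner_matrix matrix_matrix_mult_def sum_distrib_right)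
  also have "\<dots> = (\<Sum>i\<in>UNIV. \<Sum>k\<in>UNIV. \<Sum>j\<in>UNIV. A$i$k * B$k$j * C$i$j)"
    by (intro sum.cong refl sum.swap)
  also have "\<dots> = (\<Sum>k\<in>UNIV. \<Sum>j\<in>UNIV. \<Sum>i\<in>UNIV. A$i$k * B$k$j * C$i$j)"
    by (subst sum.swap) (intro sum.cong refl sum.swap)
  also have "\<dots> = B \<bullet> (transpose A ** C)"
    by (simp add: inner_matrix matrix_matrix_mult_def sum_distrib_left transpose_def mult_ac)
  finally show ?thesis .
qed

lemma norm_transpose: "norm (transpose (A :: real^'n^'m)) = norm A"
proof -
  have "transpose A \<bullet> transpose A = A \<bullet> A"
    unfolding inner_matrix transpose_def vec_lambda_beta by (rule sum.swap)
  then show ?thesis by (simp add: norm_eq_sqrt_inner)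
qed

lemma norm_orthonormal_mult_left:
  fixes U :: "real^'k^'m" and X :: "real^'n^'k"
  assumes "transpose U ** U = mat 1"
  shows "norm (U ** X) = norm X"
proof -
  have "(U ** X) \<bullet> (U ** X) = X \<bullet> X"
    by (simp add: inner_matrix_mult_left matrix_mul_assoc assms)
  then show ?thesis by (simp add: norm_eq_sqrt_inner)
qed

lemma norm_mult_orthonormal_right:
  fixes V :: "real^'k^'n" and X :: "real^'k^'m"
  assumes "transpose V ** V = mat 1"
  shows "norm (X ** transpose V) = norm X"
  by (metis norm_transpose norm_orthonormal_mult_left[OF assms] matrix_transpose_mul transpose_transpose)

lemma matrix_sum_mult_left: "(P :: real^'k^'m) ** (\<Sum>i\<in>I. A i) = (\<Sum>i\<in>I. P ** A i)"
  by (induction I rule: infinite_finite_induct) (auto simp: matrix_add_ldistrib)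

lemma matrix_sum_mult_right: "(\<Sum>i\<in>I. A i) ** (P :: real^'n^'k) = (\<Sum>i\<in>I. A i ** P :: real^'n^'m)"
  by (simp add: vec_eq_iff matrix_matrix_mult_def sum_component sum_distrib_right) (intro allI sum.swap)

lemma transpose_sum: "transpose (\<Sum>i\<in>I. A i) = (\<Sum>i\<in>I. transpose (A i :: real^'n^'m))"
  by (simp add: vec_eq_iff transpose_def sum_component)

context
  fixes P :: "real^'r^'m"
  assumes orthonormal: "transpose P ** P = mat 1"
begin

lemma norm_projection: "norm (P ** transpose P ** D) = norm (transpose P ** D)"
  using norm_orthonormal_mult_left[OF orthonormal] by (simp add: matrix_mul_assoc[symmetric])

lemma norm_projection_residual_sq:
  "(norm (D - P ** transpose P ** D))\<^sup>2 = (norm D)\<^sup>2 - (norm (transpose P ** D))\<^sup>2"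
proof -
  have "D \<bullet> (P ** transpose P ** D) = (norm (transpose P ** D))\<^sup>2"
    by (subst inner_commute) (simp add: matrix_mul_assoc[symmetric] inner_matrix_mult_left power2_norm_eq_inner)
  then show ?thesis
    using dot_norm_neg[of D "P ** transpose P ** D"] norm_projection[of D] by simp
qed

lemma norm_projection_le: "norm (P ** transpose P ** D) \<le> norm D"
proof -
  have "(norm (transpose P ** D))\<^sup>2 \<le> (norm D)\<^sup>2"
    using norm_projection_residual_sq[of D] by (metis diff_ge_0_iff_ge zero_le_power2)
  then show ?thesis
    unfolding norm_projection by (rule power2_le_imp_le) simp
qed

lemma norm_projection_residual_le: "norm (D - P ** transpose P ** D) \<le> norm D"
  by (rule power2_le_imp_le) (simp_all add: norm_projection_residual_sq)

end

lemma mean_le_mean_of_top: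
  fixes f :: "'a \<Rightarrow> real"
  assumes "finite I" "T \<subseteq> I" and top: "\<And>k j. k \<in> I - T \<Longrightarrow> j \<in> T \<Longrightarrow> f k \<le> f j"
  shows "real (card T) * sum f I \<le> real (card I) * sum f T"
proof -
  have fin: "finite T" "finite (I - T)" using assms finite_subset by auto
  have "real (card T) * sum f (I - T) = (\<Sum>j\<in>T. \<Sum>k\<in>I - T. f k)" by simp
  also have "\<dots> \<le> (\<Sum>j\<in>T. \<Sum>k\<in>I - T. f j)" by (intro sum_mono top) auto
  also have "\<dots> = real (card (I - T)) * sum f T" by (simp add: sum_distrib_left)
  finally have "real (card T) * sum f (I - T) \<le> real (card (I - T)) * sum f T" .
  moreover have "sum f I = sum f T + sum f (I - T)"
    using assms by (metis add.commute sum.subset_diff)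
  moreover have "real (card I) = real (card T) + real (card (I - T))"
    using assms by (simp add: card_Diff_subset card_mono fin)
  ultimately show ?thesis by (simp add: algebra_simps)
qed

definition diag_matrix :: "('n \<Rightarrow> real) \<Rightarrow> real^'n^'n" where
  "diag_matrix s = (\<chi> i j. if i = j then s i else 0)"

definition column_selection :: "('r \<Rightarrow> 'n) \<Rightarrow> real^'r^'n" where
  "column_selection emb = (\<chi> k j. if k = emb j then 1 else 0)"

lemma column_selection_mult: "(A ** column_selection emb) $ i $ j = A $ i $ emb j"
proof -
  have "(A ** column_selection emb) $ i $ j = (\<Sum>k\<in>UNIV. if k = emb j then A $ i $ k else 0)"
    unfolding matrix_matrix_mult_def column_selection_def vec_lambda_beta by (intro sum.cong) auto
  then show ?thesis by simp
qed

lemma transpose_column_selection_mult: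
  "(transpose (column_selection emb) ** A) $ j $ k = A $ emb j $ k"
proof -
  have "(transpose (column_selection emb) ** A) $ j $ k = (\<Sum>l\<in>UNIV. if l = emb j then A $ l $ k else 0)"
    unfolding matrix_matrix_mult_def column_selection_def transpose_def vec_lambda_beta
    by (intro sum.cong) auto
  then show ?thesis by simp
qed

lemma column_selection_orthonormal:
  assumes "inj emb"
  shows "transpose (column_selection emb) ** column_selection emb = mat 1"
  using assms
  by (simp add: vec_eq_iff transpose_column_selection_mult mat_def, simp add: column_selection_def inj_eq)

lemma norm_sq_diag_matrix: "(norm (diag_matrix s))\<^sup>2 = (\<Sum>k\<in>UNIV. (s k)\<^sup>2)"
proof -
  have "(norm (diag_matrix s))\<^sup>2 = (\<Sum>i\<in>UNIV. \<Sum>j\<in>UNIV. if j = i then (s i)\<^sup>2 else 0)"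
    unfolding norm_sq_matrix diag_matrix_def by (intro sum.cong) auto
  then show ?thesis by simp
qed

lemma norm_sq_selected_diag_matrix:
  "(norm (transpose (column_selection emb) ** diag_matrix s))\<^sup>2 = (\<Sum>j\<in>UNIV. (s (emb j))\<^sup>2)"
proof -
  have "(norm (transpose (column_selection emb) ** diag_matrix s))\<^sup>2
      = (\<Sum>j\<in>UNIV. \<Sum>k\<in>UNIV. if k = emb j then (s (emb j))\<^sup>2 else 0)"
    unfolding norm_sq_matrix transpose_column_selection_mult diag_matrix_def by (intro sum.cong) auto
  then show ?thesis by simp
qed

lemma top_left_sv_decomp:
  fixes D :: "real^'n^'m"
  assumes "is_top_left_sv D P"
  obtains U :: "real^'n^'m" and V :: "real^'n^'n" and s emb
  where "transpose U ** U = mat 1" "transpose V ** V = mat 1"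
    "D = U ** diag_matrix s ** transpose V" "P = U ** column_selection emb" "inj emb"
    "\<And>j k. k \<notin> range emb \<Longrightarrow> s k \<le> s (emb j)" "\<And>k. 0 \<le> s k"
proof -
  from assms obtain U :: "real^'n^'m" and V :: "real^'n^'n" and s emb where
    "transpose U ** U = mat 1" "transpose V ** V = mat 1" "D = U ** diag_matrix s ** transpose V"
    "inj emb" and P: "\<forall>a j. P $ a $ j = U $ a $ emb j"
    and "\<forall>j k. k \<notin> range emb \<longrightarrow> s k \<le> s (emb j)" "\<forall>k. 0 \<le> s k"
    unfolding is_top_left_sv_def diag_matrix_def by (elim exE conjE) blast
  moreover from P have "P = U ** column_selection emb"
    by (simp add: vec_eq_iff column_selection_mult)
  ultimately show ?thesis using that by blast
qed

lemma top_left_sv_orthonormal: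
  fixes D :: "real^'n^'m"
  assumes "is_top_left_sv D P"
  shows "transpose P ** P = mat 1"
proof -
  obtain U :: "real^'n^'m" and emb where U: "transpose U ** U = mat 1" and P: "P = U ** column_selection emb"
    and emb: "inj emb"
    using top_left_sv_decomp[OF assms] by metis
  have "transpose P ** P = transpose (column_selection emb) ** ((transpose U ** U) ** column_selection emb)"
    by (simp add: P matrix_transpose_mul matrix_mul_assoc)
  also have "\<dots> = mat 1"
    by (simp add: U column_selection_orthonormal[OF emb])
  finally show ?thesis .
qed

lemma top_left_sv_energy:
  fixes D :: "real^'n^'m" and P :: "real^'r^'m"
  assumes "is_top_left_sv D P"
  shows "real CARD('r) * (norm D)\<^sup>2 \<le> real CARD('n) * (norm (transpose P ** D))\<^sup>2"
proof -
  obtain U V s and emb :: "'r \<Rightarrow> 'n" where U: "transpose U ** U = mat 1"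
    and V: "transpose V ** V = mat 1" and D: "D = U ** diag_matrix s ** transpose V"
    and P: "P = U ** column_selection emb" and emb: "inj emb"
    and top: "\<And>j k. k \<notin> range emb \<Longrightarrow> s k \<le> s (emb j)" and nonneg: "\<And>k. 0 \<le> s k"
    using top_left_sv_decomp[OF assms] by metis
  have "transpose P ** D = transpose (column_selection emb) ** (transpose U ** U) ** diag_matrix s ** transpose V"
    by (simp add: P D matrix_transpose_mul matrix_mul_assoc)
  also have "\<dots> = transpose (column_selection emb) ** diag_matrix s ** transpose V"
    by (simp add: U)
  finally have "transpose P ** D = transpose (column_selection emb) ** diag_matrix s ** transpose V" .
  then have PD: "(norm (transpose P ** D))\<^sup>2 = (\<Sum>k\<in>range emb. (s k)\<^sup>2)"
    using emb by (simp add: norm_mult_orthonormal_right[OF V] norm_sq_selected_diag_matrix sum.reindex)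
  have "(norm D)\<^sup>2 = (\<Sum>k\<in>UNIV. (s k)\<^sup>2)"
    by (simp add: D matrix_mul_assoc[symmetric] norm_mult_orthonormal_right[OF V]
        norm_orthonormal_mult_left[OF U] norm_sq_diag_matrix)
  moreover have "real (card (range emb)) * (\<Sum>k\<in>UNIV. (s k)\<^sup>2) \<le> real CARD('n) * (\<Sum>k\<in>range emb. (s k)\<^sup>2)"
    using top nonneg by (intro mean_le_mean_of_top) (auto intro: power_mono)
  ultimately show ?thesis
    using emb by (simp add: PD card_image)
qed

lemma top_left_sv_residual_le:
  fixes D :: "real^'n^'m" and P :: "real^'r^'m"
  assumes sv: "is_top_left_sv D P" and "CARD('r) \<le> CARD('n)"
  shows "norm (D - P ** transpose P ** D) \<le> (1 - real CARD('r) / real CARD('n) / 2) * norm D"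
proof -
  define \<delta> where "\<delta> = real CARD('r) / real CARD('n)"
  have \<delta>: "0 \<le> \<delta>" "\<delta> \<le> 1" unfolding \<delta>_def using assms(2) by auto
  have "\<delta> * (norm D)\<^sup>2 \<le> (norm (transpose P ** D))\<^sup>2"
    using top_left_sv_energy[OF sv] by (simp add: \<delta>_def field_simps)
  then have "(norm (D - P ** transpose P ** D))\<^sup>2 \<le> (1 - \<delta>) * (norm D)\<^sup>2"
    by (simp add: norm_projection_residual_sq[OF top_left_sv_orthonormal[OF sv]] algebra_simps)
  also have "\<dots> \<le> ((1 - \<delta> / 2) * norm D)\<^sup>2"
    using \<delta> by (simp add: power2_eq_square algebra_simps)
  finally show ?thesis
    unfolding \<delta>_def[symmetric] by (rule power2_le_imp_le) (use \<delta> in simp)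
qed

definition node_avg :: "nat \<Rightarrow> (nat \<Rightarrow> 'a::real_vector) \<Rightarrow> 'a" where
  "node_avg N f = (1 / real N) *\<^sub>R (\<Sum>i<N. f i)"

abbreviation mom_of :: "'x \<times> 'q \<times> 'm \<times> 'e \<Rightarrow> 'm" where
  "mom_of st \<equiv> fst (snd (snd st))"

abbreviation err_of :: "'x \<times> 'q \<times> 'm \<times> 'e \<Rightarrow> 'e" where
  "err_of st \<equiv> snd (snd (snd st))"

lemma psgd_step_projection:
  fixes qrsel :: "real^('r::{finite,linorder})^'m \<Rightarrow> real^('r::{finite,linorder})^'m"
    and svsel :: "real^'n^'m \<Rightarrow> real^('r::{finite,linorder})^'m"
    and gradF :: "real^'n^'m \<Rightarrow> 'xi \<Rightarrow> real^'n^'m" and N :: nat and X z e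
  assumes qr: "\<And>A. is_QR_factor A (qrsel A)" and sv: "\<And>D. is_top_left_sv D (svsel D)"
  defines "\<Delta> \<equiv> node_avg N (\<lambda>i. gradF X (z i)) + node_avg N e"
  obtains P :: "real^('r::{finite,linorder})^'m"
  where "transpose P ** P = mat 1" "t mod \<tau> = 0 \<Longrightarrow> is_top_left_sv \<Delta> P"
    "node_avg N (err_of (psgd_step qrsel svsel gradF N \<eta> \<mu> \<tau> t z (X, Q, m, e)))
       = \<Delta> - P ** transpose P ** \<Delta>"
    "mom_of (psgd_step qrsel svsel gradF N \<eta> \<mu> \<tau> t z (X, Q, m, e)) = \<mu> *\<^sub>R m + P ** transpose P ** \<Delta>"
proof -
  define P where "P = (if t mod \<tau> \<noteq> 0
    then qrsel ((1 / real N) *\<^sub>R (\<Sum>i<N. (gradF X (z i) + e i) ** Q)) else svsel \<Delta>)"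
  have avg: "(1 / real N) *\<^sub>R (\<Sum>i<N. gradF X (z i) + e i) = \<Delta>"
    unfolding \<Delta>_def node_avg_def by (simp add: sum.distrib scaleR_add_right)
  have Q: "(1 / real N) *\<^sub>R (\<Sum>i<N. transpose (gradF X (z i) + e i) ** P) = transpose \<Delta> ** P"
    unfolding avg[symmetric] matrix_sum_mult_right[symmetric] transpose_sum[symmetric]
    by (simp add: scalar_matrix_assoc transpose_scalar)
  have err: "(1 / real N) *\<^sub>R (\<Sum>i<N. (gradF X (z i) + e i) - P ** transpose P ** (gradF X (z i) + e i))
      = \<Delta> - P ** transpose P ** \<Delta>"
    unfolding avg[symmetric] sum_subtractf matrix_sum_mult_left[symmetric]
    by (simp add: matrix_scalar_ac scaleR_diff_right scalar_matrix_assoc)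
  show ?thesis
  proof
    show "transpose P ** P = mat 1"
      using qr top_left_sv_orthonormal[OF sv] by (simp add: P_def is_QR_factor_def)
    show "is_top_left_sv \<Delta> P" if "t mod \<tau> = 0"
      using that sv by (simp add: P_def)
    show "node_avg N (err_of (psgd_step qrsel svsel gradF N \<eta> \<mu> \<tau> t z (X, Q, m, e)))
        = \<Delta> - P ** transpose P ** \<Delta>"
      unfolding psgd_step_def Let_def prod.case avg P_def[symmetric] node_avg_def using err by simp
    show "mom_of (psgd_step qrsel svsel gradF N \<eta> \<mu> \<tau> t z (X, Q, m, e)) = \<mu> *\<^sub>R m + P ** transpose P ** \<Delta>"
      unfolding psgd_step_def Let_def prod.case avg P_def[symmetric]
      using Q by (simp add: matrix_transpose_mul matrix_mul_assoc)
  qed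
qed

definition restart_factor :: "real \<Rightarrow> nat \<Rightarrow> nat \<Rightarrow> real" where
  "restart_factor q \<tau> t = (if t mod \<tau> = 0 then q else 1)"

lemma psgd_step_norm_le:
  fixes qrsel :: "real^('r::{finite,linorder})^'m \<Rightarrow> real^('r::{finite,linorder})^'m"
    and svsel :: "real^'n^'m \<Rightarrow> real^('r::{finite,linorder})^'m"
    and gradF :: "real^'n^'m \<Rightarrow> 'xi \<Rightarrow> real^'n^'m" and N :: nat and st z
  assumes qr: "\<And>A. is_QR_factor A (qrsel A)" and sv: "\<And>D. is_top_left_sv D (svsel D)"
    and rn: "CARD('r) \<le> CARD('n)" and \<mu>: "0 \<le> \<mu>"
  defines "a \<equiv> norm (node_avg N (\<lambda>i. gradF (fst st) (z i))) + norm (node_avg N (err_of st))"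
  shows "norm (node_avg N (err_of (psgd_step qrsel svsel gradF N \<eta> \<mu> \<tau> t z st)))
           \<le> restart_factor (1 - real CARD('r) / real CARD('n) / 2) \<tau> t * a"
    and "norm (mom_of (psgd_step qrsel svsel gradF N \<eta> \<mu> \<tau> t z st)) \<le> \<mu> * norm (mom_of st) + a"
proof -
  obtain X Q m e where st: "st = (X, Q, m, e)" by (cases st) auto
  define \<Delta> where "\<Delta> = node_avg N (\<lambda>i. gradF X (z i)) + node_avg N e"
  obtain P :: "real^('r::{finite,linorder})^'m" where P: "transpose P ** P = mat 1"
    and svP: "t mod \<tau> = 0 \<Longrightarrow> is_top_left_sv \<Delta> P"
    and err: "node_avg N (err_of (psgd_step qrsel svsel gradF N \<eta> \<mu> \<tau> t z (X, Q, m, e)))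
      = \<Delta> - P ** transpose P ** \<Delta>"
    and mom: "mom_of (psgd_step qrsel svsel gradF N \<eta> \<mu> \<tau> t z (X, Q, m, e)) = \<mu> *\<^sub>R m + P ** transpose P ** \<Delta>"
    using psgd_step_projection[OF qr sv, where gradF = gradF and N = N and X = X and z = z and e = e
          and \<eta> = \<eta> and \<mu> = \<mu> and \<tau> = \<tau> and t = t and Q = Q and m = m]
    unfolding \<Delta>_def by blast
  have \<Delta>: "norm \<Delta> \<le> a"
    unfolding a_def \<Delta>_def st by (simp add: norm_triangle_ineq)
  define \<rho> where "\<rho> = restart_factor (1 - real CARD('r) / real CARD('n) / 2) \<tau> t"
  have "norm (\<Delta> - P ** transpose P ** \<Delta>) \<le> \<rho> * norm \<Delta>"
    using top_left_sv_residual_le[OF svP rn] norm_projection_residual_le[OF P, of \<Delta>]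
    by (simp add: \<rho>_def restart_factor_def)
  also have "\<dots> \<le> \<rho> * a"
    using \<Delta> rn by (intro mult_left_mono) (auto simp: \<rho>_def restart_factor_def)
  finally show "norm (node_avg N (err_of (psgd_step qrsel svsel gradF N \<eta> \<mu> \<tau> t z st)))
      \<le> restart_factor (1 - real CARD('r) / real CARD('n) / 2) \<tau> t * a"
    unfolding st err \<rho>_def .
  have "norm (\<mu> *\<^sub>R m + P ** transpose P ** \<Delta>) \<le> \<mu> * norm m + norm \<Delta>"
    using norm_triangle_ineq[of "\<mu> *\<^sub>R m" "P ** transpose P ** \<Delta>"] norm_projection_le[OF P, of \<Delta>] \<mu>
    by simp
  then show "norm (mom_of (psgd_step qrsel svsel gradF N \<eta> \<mu> \<tau> t z st)) \<le> \<mu> * norm (mom_of st) + a"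
    unfolding mom st using \<Delta> by simp
qed

text \<open>Coefficients of \<open>\<parallel>g\<^sub>k\<parallel>\<close> in the unrolled bounds for the averaged error and for the momentum
  stored in state \<open>t\<close> (which is \<open>m\<^sub>t\<^sub>-\<^sub>1\<close>).\<close>

fun err_weight :: "(nat \<Rightarrow> real) \<Rightarrow> nat \<Rightarrow> nat \<Rightarrow> real" where
  "err_weight \<rho> 0 k = 0"
| "err_weight \<rho> (Suc t) k = \<rho> t * (err_weight \<rho> t k + (if k = t then 1 else 0))"

fun mom_weight :: "(nat \<Rightarrow> real) \<Rightarrow> real \<Rightarrow> nat \<Rightarrow> nat \<Rightarrow> real" where
  "mom_weight \<rho> \<mu> 0 k = 0"
| "mom_weight \<rho> \<mu> (Suc t) k = \<mu> * mom_weight \<rho> \<mu> t k + err_weight \<rho> t k + (if k = t then 1 else 0)"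

lemma err_weight_eq_0: "t \<le> k \<Longrightarrow> err_weight \<rho> t k = 0"
  by (induction t) auto

lemma mom_weight_eq_0: "t \<le> k \<Longrightarrow> mom_weight \<rho> \<mu> t k = 0"
  by (induction t) (auto simp: err_weight_eq_0)

lemma err_weight_nonneg: "(\<And>t. 0 \<le> \<rho> t) \<Longrightarrow> 0 \<le> err_weight \<rho> t k"
  by (induction t) auto

lemma mom_weight_nonneg: "(\<And>t. 0 \<le> \<rho> t) \<Longrightarrow> 0 \<le> \<mu> \<Longrightarrow> 0 \<le> mom_weight \<rho> \<mu> t k"
  by (induction t) (auto simp: err_weight_nonneg)

lemma sum_err_weight_Suc:
  "(\<Sum>k<Suc t. err_weight \<rho> (Suc t) k * a k) = \<rho> t * ((\<Sum>k<t. err_weight \<rho> t k * a k) + a t)"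
  by (simp add: err_weight_eq_0 sum_distrib_left algebra_simps)

lemma sum_mom_weight_Suc:
  "(\<Sum>k<Suc t. mom_weight \<rho> \<mu> (Suc t) k * a k)
     = \<mu> * (\<Sum>k<t. mom_weight \<rho> \<mu> t k * a k) + (\<Sum>k<t. err_weight \<rho> t k * a k) + a t"
  by (simp add: err_weight_eq_0 mom_weight_eq_0 sum_distrib_left sum.distrib algebra_simps)

lemma coupled_recursion_bound:
  fixes E M a :: "nat \<Rightarrow> real"
  assumes \<rho>: "\<And>t. 0 \<le> \<rho> t" and \<mu>: "0 \<le> \<mu>"
    and "E 0 = 0" "M 0 = 0"
    and E_Suc: "\<And>t. E (Suc t) \<le> \<rho> t * (a t + E t)"
    and M_Suc: "\<And>t. M (Suc t) \<le> \<mu> * M t + a t + E t"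
  shows "E t \<le> (\<Sum>k<t. err_weight \<rho> t k * a k)" and "M t \<le> (\<Sum>k<t. mom_weight \<rho> \<mu> t k * a k)"
proof -
  show E: "E t \<le> (\<Sum>k<t. err_weight \<rho> t k * a k)" for t
  proof (induction t)
    case 0
    then show ?case using \<open>E 0 = 0\<close> by simp
  next
    case (Suc t)
    have "E (Suc t) \<le> \<rho> t * (a t + E t)" by (rule E_Suc)
    also have "\<dots> \<le> \<rho> t * (a t + (\<Sum>k<t. err_weight \<rho> t k * a k))"
      using Suc.IH \<rho> by (intro mult_left_mono) auto
    finally show ?case unfolding sum_err_weight_Suc by (simp add: algebra_simps)
  qed
  show "M t \<le> (\<Sum>k<t. mom_weight \<rho> \<mu> t k * a k)"
  proof (induction t)
    case 0
    then show ?case using \<open>M 0 = 0\<close> by simp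
  next
    case (Suc t)
    have "M (Suc t) \<le> \<mu> * M t + a t + E t" by (rule M_Suc)
    also have "\<dots> \<le> \<mu> * (\<Sum>k<t. mom_weight \<rho> \<mu> t k * a k) + a t + (\<Sum>k<t. err_weight \<rho> t k * a k)"
      using Suc.IH E[of t] \<mu> by (intro add_mono mult_left_mono) auto
    finally show ?case unfolding sum_mom_weight_Suc by (simp add: algebra_simps)
  qed
qed

lemma sum_err_weight_restart_le:
  assumes q: "0 \<le> q" "q < 1" and \<tau>: "\<tau> \<ge> 1"
  shows "(\<Sum>k<t. err_weight (restart_factor q \<tau>) t k) \<le> real \<tau> / (1 - q) - 1"
proof -
  define S where "S t = (\<Sum>k<t. err_weight (restart_factor q \<tau>) t k)" for t
  have S_Suc: "S (Suc t) = restart_factor q \<tau> t * (S t + 1)" for t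
    using sum_err_weight_Suc[of "restart_factor q \<tau>" t "\<lambda>_. 1"] by (simp add: S_def)
  define c where "c = q * real \<tau> / (1 - q)"
  have c: "q * (c + real \<tau>) = c" "c + real \<tau> = real \<tau> / (1 - q)"
    using q by (simp_all add: c_def field_simps)
  have "q \<le> q * real \<tau>" "0 \<le> q * c"
    using mult_left_mono[of 1 "real \<tau>" q] q \<tau> by (simp_all add: c_def)
  then have "q \<le> c" using c(1) by (simp add: distrib_left)
  \<comment> \<open>between two restarts the sum grows by one per step and each restart contracts it by \<open>q\<close>\<close>
  have phase: "S (Suc t) \<le> c + real (t mod \<tau>)" for t
  proof (induction t)
    case 0
    then show ?case using S_Suc[of 0] \<open>q \<le> c\<close> by (simp add: S_def restart_factor_def)
  next
    case (Suc t)
    show ?case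
    proof (cases "Suc t mod \<tau> = 0")
      case True
      then have "Suc (t mod \<tau>) = \<tau>"
        using mod_Suc[of t \<tau>] by (auto split: if_splits)
      then have "S (Suc t) + 1 \<le> c + real \<tau>"
        using Suc.IH by linarith
      then have "q * (S (Suc t) + 1) \<le> q * (c + real \<tau>)"
        using q(1) by (rule mult_left_mono)
      then show ?thesis
        using S_Suc[of "Suc t"] True c(1) by (simp add: restart_factor_def)
    next
      case False
      then have "Suc t mod \<tau> = Suc (t mod \<tau>)"
        using mod_Suc[of t \<tau>] by (auto split: if_splits)
      then show ?thesis
        using Suc.IH S_Suc[of "Suc t"] False by (simp add: restart_factor_def)
    qed
  qed
  have "c + real (t' mod \<tau>) \<le> real \<tau> / (1 - q) - 1" for t'
  proof -
    have "t' mod \<tau> + 1 \<le> \<tau>" using \<tau> by (simp add: Suc_le_eq)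
    then show ?thesis using c by linarith
  qed
  moreover have "0 \<le> real \<tau> / (1 - q) - 1" using c q \<tau> by simp
  moreover have "S 0 = 0" by (simp add: S_def)
  ultimately show ?thesis using phase unfolding S_def[symmetric] by (cases t) (auto intro: order_trans)
qed

lemma sum_mom_weight_restart_le:
  assumes q: "0 \<le> q" "q < 1" and \<tau>: "\<tau> \<ge> 1" and \<mu>: "0 \<le> \<mu>" "\<mu> < 1"
  shows "(\<Sum>k<t. mom_weight (restart_factor q \<tau>) \<mu> t k) \<le> real \<tau> / (1 - q) / (1 - \<mu>)"
proof (induction t)
  case 0
  then show ?case using q \<mu> by simp
next
  case (Suc t)
  define c where "c = real \<tau> / (1 - q)"
  have "(\<Sum>k<Suc t. mom_weight (restart_factor q \<tau>) \<mu> (Suc t) k)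
      = \<mu> * (\<Sum>k<t. mom_weight (restart_factor q \<tau>) \<mu> t k) + (\<Sum>k<t. err_weight (restart_factor q \<tau>) t k) + 1"
    using sum_mom_weight_Suc[of _ \<mu> t "\<lambda>_. 1"] by simp
  also have "\<dots> \<le> \<mu> * (c / (1 - \<mu>)) + c"
    using mult_left_mono[OF Suc.IH \<mu>(1)] sum_err_weight_restart_le[OF q \<tau>, of t]
    unfolding c_def by linarith
  also have "\<dots> = c / (1 - \<mu>)"
    using \<mu> by (simp add: field_simps)
  finally show ?case unfolding c_def .
qed

lemma weighted_sum_sq_le:
  fixes c a :: "nat \<Rightarrow> real"
  assumes "\<And>k. k \<in> A \<Longrightarrow> 0 \<le> c k"
  shows "(\<Sum>k\<in>A. c k * a k)\<^sup>2 \<le> (\<Sum>k\<in>A. c k) * (\<Sum>k\<in>A. c k * (a k)\<^sup>2)"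
proof -
  have "(\<Sum>k\<in>A. sqrt (c k) * (sqrt (c k) * a k))\<^sup>2
      \<le> (\<Sum>k\<in>A. (sqrt (c k))\<^sup>2) * (\<Sum>k\<in>A. (sqrt (c k) * a k)\<^sup>2)"
    by (rule Cauchy_Schwarz_ineq_sum)
  moreover have "(\<Sum>k\<in>A. sqrt (c k) * (sqrt (c k) * a k)) = (\<Sum>k\<in>A. c k * a k)"
    using assms by (intro sum.cong) (auto simp: mult.assoc[symmetric])
  moreover have "(\<Sum>k\<in>A. (sqrt (c k))\<^sup>2) = (\<Sum>k\<in>A. c k)"
    using assms by (intro sum.cong) auto
  moreover have "(\<Sum>k\<in>A. (sqrt (c k) * a k)\<^sup>2) = (\<Sum>k\<in>A. c k * (a k)\<^sup>2)"
    using assms by (intro sum.cong) (auto simp: power_mult_distrib)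
  ultimately show ?thesis by simp
qed

lemma psgd_mom_sq_le:
  fixes qrsel :: "real^('r::{finite,linorder})^'m \<Rightarrow> real^('r::{finite,linorder})^'m"
    and svsel :: "real^'n^'m \<Rightarrow> real^('r::{finite,linorder})^'m"
    and gradF :: "real^'n^'m \<Rightarrow> 'xi \<Rightarrow> real^'n^'m" and N :: nat and \<eta> X0 Q0 xi
  assumes qr: "\<And>A. is_QR_factor A (qrsel A)" and sv: "\<And>D. is_top_left_sv D (svsel D)"
    and rn: "CARD('r) \<le> CARD('n)" and \<mu>: "0 \<le> \<mu>" "\<mu> < 1" and \<tau>: "\<tau> \<ge> 1"
  defines "q \<equiv> 1 - real CARD('r) / real CARD('n) / 2"
    and "a \<equiv> \<lambda>k. norm (node_avg N (\<lambda>i. gradF (fst (psgd_state qrsel svsel gradF N \<eta> \<mu> \<tau> X0 Q0 xi k)) (xi k i)))"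
  shows "(norm (psgd_mom qrsel svsel gradF N \<eta> \<mu> \<tau> X0 Q0 xi t))\<^sup>2
    \<le> real \<tau> / (1 - q) / (1 - \<mu>) * (\<Sum>k<Suc t. mom_weight (restart_factor q \<tau>) \<mu> (Suc t) k * (a k)\<^sup>2)"
proof -
  define st where "st = psgd_state qrsel svsel gradF N \<eta> \<mu> \<tau> X0 Q0 xi"
  define w where "w = mom_weight (restart_factor q \<tau>) \<mu> (Suc t)"
  have q: "0 \<le> q" "q < 1" unfolding q_def using rn by auto
  have \<rho>: "0 \<le> restart_factor q \<tau> t" for t using q by (simp add: restart_factor_def)
  have w: "0 \<le> w k" for k unfolding w_def using \<rho> \<mu>(1) by (rule mom_weight_nonneg)
  have st_Suc: "st (Suc k) = psgd_step qrsel svsel gradF N \<eta> \<mu> \<tau> k (xi k) (st k)" for k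
    by (simp add: st_def)
  have "norm (mom_of (st (Suc t))) \<le> (\<Sum>k<Suc t. w k * a k)"
    unfolding w_def
  proof (rule coupled_recursion_bound(2)[OF \<rho> \<mu>(1)])
    show "norm (node_avg N (err_of (st 0))) = 0" "norm (mom_of (st 0)) = 0"
      by (simp_all add: st_def node_avg_def)
    show "norm (node_avg N (err_of (st (Suc k)))) \<le> restart_factor q \<tau> k * (a k + norm (node_avg N (err_of (st k))))"
      "norm (mom_of (st (Suc k))) \<le> \<mu> * norm (mom_of (st k)) + a k + norm (node_avg N (err_of (st k)))"
      for k
      using psgd_step_norm_le[OF qr sv rn \<mu>(1), where N = N and st = "st k" and z = "xi k" and t = k]
      unfolding st_Suc a_def q_def st_def by (simp_all add: add.assoc)
  qed
  then have "(norm (mom_of (st (Suc t))))\<^sup>2 \<le> (\<Sum>k<Suc t. w k * a k)\<^sup>2"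
    by (intro power_mono) auto
  also have "\<dots> \<le> (\<Sum>k<Suc t. w k) * (\<Sum>k<Suc t. w k * (a k)\<^sup>2)"
    using w by (rule weighted_sum_sq_le)
  also have "\<dots> \<le> real \<tau> / (1 - q) / (1 - \<mu>) * (\<Sum>k<Suc t. w k * (a k)\<^sup>2)"
    using sum_mom_weight_restart_le[OF q \<tau> \<mu>, of "Suc t"] w
    by (intro mult_right_mono sum_nonneg) (auto simp: w_def)
  finally show ?thesis
    by (simp add: psgd_mom_def st_def w_def)
qed

lemma borel_measurable_matrix_mult[measurable (raw)]:
  fixes f :: "'a \<Rightarrow> real^'n^'m" and g :: "'a \<Rightarrow> real^'p^'n"
  assumes "f \<in> borel_measurable M" "g \<in> borel_measurable M"
  shows "(\<lambda>x. f x ** g x) \<in> borel_measurable M"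
proof -
  have "continuous_on UNIV (\<lambda>x. fst x ** snd x :: real^'p^'m)"
    unfolding matrix_matrix_mult_def by (intro continuous_intros)
  from borel_measurable_continuous_Pair[OF assms this] show ?thesis by simp
qed

lemma borel_measurable_transpose[measurable (raw)]:
  fixes f :: "'a \<Rightarrow> real^'n^'m"
  assumes "f \<in> borel_measurable M"
  shows "(\<lambda>x. transpose (f x)) \<in> borel_measurable M"
proof -
  have "continuous_on UNIV (transpose :: real^'n^'m \<Rightarrow> _)"
    unfolding transpose_def by (intro continuous_intros)
  from measurable_compose[OF assms borel_measurable_continuous_onI[OF this]] show ?thesis .
qed

definition measurable_state ::
  "nat \<Rightarrow> 'a measure \<Rightarrow> ('a \<Rightarrow> 'x::topological_space \<times> 'q::topological_space \<times> 'm::topological_space \<times>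
     (nat \<Rightarrow> 'e::topological_space)) \<Rightarrow> bool" where
  "measurable_state N M st \<longleftrightarrow>
     (\<lambda>w. fst (st w)) \<in> borel_measurable M \<and> (\<lambda>w. fst (snd (st w))) \<in> borel_measurable M \<and>
     (\<lambda>w. mom_of (st w)) \<in> borel_measurable M \<and> (\<forall>i<N. (\<lambda>w. err_of (st w) i) \<in> borel_measurable M)"

lemma borel_measurable_gradF:
  assumes "(\<lambda>(X, z). gradF X z) \<in> borel_measurable (borel \<Otimes>\<^sub>M S)"
    and "X \<in> borel_measurable M" "z \<in> measurable M S"
  shows "(\<lambda>w. gradF (X w) (z w)) \<in> borel_measurable M"
  using measurable_compose[OF measurable_Pair[OF assms(2,3)] assms(1)] by simp

context
  fixes S :: "'xi measure" and gradF :: "real^'n^'m \<Rightarrow> 'xi \<Rightarrow> real^'n^'m"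
    and qrsel :: "real^('r::{finite,linorder})^'m \<Rightarrow> real^('r::{finite,linorder})^'m"
    and svsel :: "real^'n^'m \<Rightarrow> real^('r::{finite,linorder})^'m"
  assumes gradF: "(\<lambda>(X, z). gradF X z) \<in> borel_measurable (borel \<Otimes>\<^sub>M S)"
    and qrsel: "qrsel \<in> borel_measurable borel" and svsel: "svsel \<in> borel_measurable borel"
begin

lemma measurable_psgd_step:
  assumes st: "measurable_state N M st" and z: "\<And>i. i < N \<Longrightarrow> (\<lambda>w. z w i) \<in> measurable M S"
  shows "measurable_state N M (\<lambda>w. psgd_step qrsel svsel gradF N \<eta> \<mu> \<tau> t (z w) (st w))"
proof -
  define X where "X = (\<lambda>w. fst (st w))"
  define Q where "Q = (\<lambda>w. fst (snd (st w)))"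
  define m where "m = (\<lambda>w. mom_of (st w))"
  define e where "e = (\<lambda>w. err_of (st w))"
  have [measurable]: "X \<in> borel_measurable M" "Q \<in> borel_measurable M" "m \<in> borel_measurable M"
    using st by (simp_all add: measurable_state_def X_def Q_def m_def)
  define D where "D w i = gradF (X w) (z w i) + e w i" for w i
  have e: "(\<lambda>w. e w i) \<in> borel_measurable M" if "i < N" for i
    using st that by (simp add: measurable_state_def e_def)
  have D[measurable]: "(\<lambda>w. D w i) \<in> borel_measurable M" if "i < N" for i
    using borel_measurable_gradF[OF gradF _ z[OF that], of X] e[OF that]
    unfolding D_def by measurable
  define P where "P = (\<lambda>w. if t mod \<tau> \<noteq> 0 then qrsel ((1 / real N) *\<^sub>R (\<Sum>i<N. D w i ** Q w))
    else svsel ((1 / real N) *\<^sub>R (\<Sum>i<N. D w i)))"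
  have [measurable]: "P \<in> borel_measurable M"
  proof (cases "t mod \<tau> = 0")
    case True
    have "(\<lambda>w. (1 / real N) *\<^sub>R (\<Sum>i<N. D w i)) \<in> borel_measurable M" by measurable
    from measurable_compose[OF this svsel] True show ?thesis by (simp add: P_def)
  next
    case False
    have "(\<lambda>w. (1 / real N) *\<^sub>R (\<Sum>i<N. D w i ** Q w)) \<in> borel_measurable M" by measurable
    from measurable_compose[OF this qrsel] False show ?thesis by (simp add: P_def)
  qed
  define Q' where "Q' = (\<lambda>w. (1 / real N) *\<^sub>R (\<Sum>i<N. transpose (D w i) ** P w))"
  have [measurable]: "Q' \<in> borel_measurable M" unfolding Q'_def by measurable
  have step: "psgd_step qrsel svsel gradF N \<eta> \<mu> \<tau> t (z w) (st w) =
      (X w - \<eta> *\<^sub>R (\<mu> *\<^sub>R m w + P w ** transpose (Q' w)), Q' w, \<mu> *\<^sub>R m w + P w ** transpose (Q' w),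
       \<lambda>i. D w i - P w ** transpose (P w) ** D w i)" for w
    by (simp add: psgd_step_def Let_def case_prod_unfold X_def Q_def m_def e_def D_def P_def Q'_def)
  show ?thesis
    unfolding measurable_state_def step by simp measurable
qed

lemma measurable_psgd_state:
  assumes "\<And>s i. s < t \<Longrightarrow> i < N \<Longrightarrow> xi s i \<in> measurable M S"
  shows "measurable_state N M (\<lambda>w. psgd_state qrsel svsel gradF N \<eta> \<mu> \<tau> X0 Q0 (\<lambda>s i. xi s i w) t)"
  using assms
proof (induction t)
  case 0
  then show ?case by (simp add: measurable_state_def)
next
  case (Suc t)
  then show ?case by (simp add: measurable_psgd_step)
qed

end

definition trunc_state :: "nat \<Rightarrow> 'x \<times> 'q \<times> 'm \<times> (nat \<Rightarrow> 'e::zero) \<Rightarrow> 'x \<times> 'q \<times> 'm \<times> (nat \<Rightarrow> 'e)" where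
  "trunc_state N st = (fst st, fst (snd st), mom_of st, \<lambda>i. if i < N then err_of st i else 0)"

lemma psgd_step_trunc_state:
  fixes qrsel :: "real^('r::finite)^'m \<Rightarrow> real^('r::finite)^'m"
    and gradF :: "real^'n^'m \<Rightarrow> 'xi \<Rightarrow> real^'n^'m"
  assumes "trunc_state N st = trunc_state N st'" and z: "\<And>i. i < N \<Longrightarrow> z i = z' i"
  shows "trunc_state N (psgd_step qrsel svsel gradF N \<eta> \<mu> \<tau> t z st)
       = trunc_state N (psgd_step qrsel svsel gradF N \<eta> \<mu> \<tau> t z' st')"
proof -
  obtain X Q m e e' where st: "st = (X, Q, m, e)" "st' = (X, Q, m, e')" and e: "\<And>i. i < N \<Longrightarrow> e i = e' i"
    using assms(1) by (cases st; cases st') (auto simp: trunc_state_def fun_eq_iff split: if_splits)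
  have D: "gradF X (z i) + e i = gradF X (z' i) + e' i" if "i < N" for i
    using that z e by simp
  have "(\<Sum>i<N. gradF X (z i) + e i) = (\<Sum>i<N. gradF X (z' i) + e' i)"
    "(\<Sum>i<N. (gradF X (z i) + e i) ** Q) = (\<Sum>i<N. (gradF X (z' i) + e' i) ** Q)"
    "(\<Sum>i<N. transpose (gradF X (z i) + e i) ** P) = (\<Sum>i<N. transpose (gradF X (z' i) + e' i) ** P)"
    for P :: "real^('r::finite)^'m"
    using D by (auto intro: sum.cong)
  then show ?thesis
    by (simp add: st psgd_step_def Let_def trunc_state_def D cong: if_cong)
qed

lemma psgd_state_trunc_state:
  assumes "\<And>s i. s < t \<Longrightarrow> i < N \<Longrightarrow> xi s i = xi' s i"
  shows "trunc_state N (psgd_state qrsel svsel gradF N \<eta> \<mu> \<tau> X0 Q0 xi t)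
       = trunc_state N (psgd_state qrsel svsel gradF N \<eta> \<mu> \<tau> X0 Q0 xi' t)"
  using assms by (induction t) (auto intro!: psgd_step_trunc_state)

lemma fst_psgd_state_cong:
  assumes "\<And>s i. s < t \<Longrightarrow> i < N \<Longrightarrow> xi s i = xi' s i"
  shows "fst (psgd_state qrsel svsel gradF N \<eta> \<mu> \<tau> X0 Q0 xi t) = fst (psgd_state qrsel svsel gradF N \<eta> \<mu> \<tau> X0 Q0 xi' t)"
  using arg_cong[OF psgd_state_trunc_state[OF assms], where f = fst] by (simp add: trunc_state_def)

lemma (in prob_space) nn_integral_indep_var_le:
  assumes indep: "indep_var S X T Y"
    and \<Phi>: "\<Phi> \<in> measurable S S'" and \<Psi>: "\<Psi> \<in> measurable T T'" and f: "f \<in> borel_measurable (S' \<Otimes>\<^sub>M T')"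
    and bound: "\<And>x. x \<in> space S' \<Longrightarrow> (\<integral>\<^sup>+ y. f (x, y) \<partial>distr M T' (\<Psi> \<circ> Y)) \<le> c"
  shows "(\<integral>\<^sup>+ \<omega>. f (\<Phi> (X \<omega>), \<Psi> (Y \<omega>)) \<partial>M) \<le> c"
proof -
  have X: "random_variable S X" and Y: "random_variable T Y"
    and joint: "distr M S X \<Otimes>\<^sub>M distr M T Y = distr M (S \<Otimes>\<^sub>M T) (\<lambda>\<omega>. (X \<omega>, Y \<omega>))"
    using indep by (simp_all add: indep_var_distribution_eq)
  interpret PX: prob_space "distr M S X" using X by (rule prob_space_distr)
  interpret PY: prob_space "distr M T Y" using Y by (rule prob_space_distr)
  define g where "g p = f (\<Phi> (fst p), \<Psi> (snd p))" for p
  have g: "g \<in> borel_measurable (S \<Otimes>\<^sub>M T)"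
    unfolding g_def using \<Phi> \<Psi> f by measurable
  then have g': "g \<in> borel_measurable (distr M S X \<Otimes>\<^sub>M distr M T Y)"
    by (simp add: measurable_cong_sets[OF sets_pair_measure_cong[OF sets_distr sets_distr] refl])
  have "(\<integral>\<^sup>+ p. g p \<partial>distr M (S \<Otimes>\<^sub>M T) (\<lambda>\<omega>. (X \<omega>, Y \<omega>))) = (\<integral>\<^sup>+ \<omega>. g (X \<omega>, Y \<omega>) \<partial>M)"
    using g by (intro nn_integral_distr measurable_Pair X Y) simp
  then have "(\<integral>\<^sup>+ \<omega>. f (\<Phi> (X \<omega>), \<Psi> (Y \<omega>)) \<partial>M) = (\<integral>\<^sup>+ p. g p \<partial>(distr M S X \<Otimes>\<^sub>M distr M T Y))"
    by (simp add: joint g_def)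
  also have "\<dots> = (\<integral>\<^sup>+ x. \<integral>\<^sup>+ y. g (x, y) \<partial>distr M T Y \<partial>distr M S X)"
    by (rule PY.nn_integral_fst[symmetric, OF g'])
  also have "\<dots> \<le> (\<integral>\<^sup>+ x. c \<partial>distr M S X)"
  proof (rule nn_integral_mono)
    fix x assume "x \<in> space (distr M S X)"
    then have "\<Phi> x \<in> space S'" using \<Phi> by (auto simp: measurable_space)
    moreover have "(\<integral>\<^sup>+ y. g (x, y) \<partial>distr M T Y) = (\<integral>\<^sup>+ y. f (\<Phi> x, y) \<partial>distr M T' (\<Psi> \<circ> Y))"
      using Y \<Psi> \<open>\<Phi> x \<in> space S'\<close> f
      by (simp add: g_def nn_integral_distr distr_distr[symmetric])
    ultimately show "(\<integral>\<^sup>+ y. g (x, y) \<partial>distr M T Y) \<le> c" using bound by simp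
  qed
  also have "\<dots> = c"
    using PX.emeasure_space_1 by simp
  finally show ?thesis .
qed

lemma nn_integral_weighted_sum_le:
  fixes c :: "'k \<Rightarrow> real" and a :: "'k \<Rightarrow> 'w \<Rightarrow> real"
  assumes "finite K" and c: "\<And>k. k \<in> K \<Longrightarrow> 0 \<le> c k" and a: "\<And>k \<omega>. 0 \<le> a k \<omega>"
    and meas: "\<And>k. k \<in> K \<Longrightarrow> (\<lambda>\<omega>. ennreal (a k \<omega>)) \<in> borel_measurable M"
    and bound: "\<And>k. k \<in> K \<Longrightarrow> (\<integral>\<^sup>+ \<omega>. ennreal (a k \<omega>) \<partial>M) \<le> ennreal G"
  shows "(\<integral>\<^sup>+ \<omega>. ennreal (\<Sum>k\<in>K. c k * a k \<omega>) \<partial>M) \<le> ennreal ((\<Sum>k\<in>K. c k) * G)"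
proof -
  have "(\<integral>\<^sup>+ \<omega>. ennreal (\<Sum>k\<in>K. c k * a k \<omega>) \<partial>M) = (\<integral>\<^sup>+ \<omega>. (\<Sum>k\<in>K. ennreal (c k) * ennreal (a k \<omega>)) \<partial>M)"
    using c a by (intro nn_integral_cong) (simp add: sum_ennreal[symmetric] ennreal_mult)
  also have "\<dots> = (\<Sum>k\<in>K. ennreal (c k) * (\<integral>\<^sup>+ \<omega>. ennreal (a k \<omega>) \<partial>M))"
    using meas by (simp add: nn_integral_sum nn_integral_cmult)
  also have "\<dots> \<le> (\<Sum>k\<in>K. ennreal (c k) * ennreal G)"
    using bound by (intro sum_mono mult_left_mono) auto
  also have "\<dots> = ennreal ((\<Sum>k\<in>K. c k) * G)"
    using c by (simp add: sum_distrib_right[symmetric] ennreal_mult' sum_nonneg)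
  finally show ?thesis .
qed

locale node_samples = prob_space M for M :: "'w measure" +
  fixes S :: "'xi measure" and D :: "nat \<Rightarrow> 'xi measure" and xi :: "nat \<Rightarrow> nat \<Rightarrow> 'w \<Rightarrow> 'xi"
    and N :: nat
  assumes N: "N \<ge> 1"
    and sets_D: "\<And>i. i < N \<Longrightarrow> sets (D i) = sets S"
    and xi_measurable: "\<And>t i. i < N \<Longrightarrow> xi t i \<in> measurable M S"
    and xi_distr: "\<And>t i. i < N \<Longrightarrow> distr M (D i) (xi t i) = D i"
    and xi_indep: "indep_vars (\<lambda>_. S) (\<lambda>(t, i). xi t i) (UNIV \<times> {..<N})"
begin

lemma distr_sample_block:
  "distr M (PiM {..<N} (\<lambda>_. S)) (\<lambda>\<omega>. \<lambda>i\<in>{..<N}. xi k i \<omega>) = PiM {..<N} D"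
proof -
  have "indep_vars (\<lambda>j. PiM {(k, j)} (\<lambda>_. S)) (\<lambda>j \<omega>. \<lambda>p\<in>{(k, j)}. case_prod xi p \<omega>) {..<N}"
    using indep_vars_restrict[OF xi_indep, where K = "\<lambda>j. {(k, j)}" and L = "{..<N}"]
    by (auto simp: disjoint_family_on_def)
  then have "indep_vars (\<lambda>_. S) (\<lambda>j \<omega>. (\<lambda>p\<in>{(k, j)}. case_prod xi p \<omega>) (k, j)) {..<N}"
    by (rule indep_vars_compose2) (auto intro: measurable_component_singleton)
  then have indep: "indep_vars (\<lambda>_. S) (xi k) {..<N}"
    by (simp cong: indep_vars_cong)
  have "distr M S (xi k i) = D i" if "i < N" for i
    using xi_distr[OF that] by (metis distr_cong sets_D[OF that])
  moreover have "{..<N} \<noteq> {}" using N by (auto simp: lessThan_empty_iff)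
  ultimately show ?thesis
    using indep xi_measurable by (subst (asm) indep_vars_iff_distr_eq_PiM') (auto intro!: PiM_cong)
qed

lemma nn_integral_sq_norm_grad_avg_le:
  fixes gradF :: "real^'n^'m \<Rightarrow> 'xi \<Rightarrow> real^'n^'m"
    and qrsel :: "real^('r::{finite,linorder})^'m \<Rightarrow> real^('r::{finite,linorder})^'m"
    and svsel :: "real^'n^'m \<Rightarrow> real^('r::{finite,linorder})^'m" and \<eta> \<mu> \<tau> X0 Q0 k
  assumes gradF: "(\<lambda>(X, z). gradF X z) \<in> borel_measurable (borel \<Otimes>\<^sub>M S)"
    and qrsel: "qrsel \<in> borel_measurable borel" and svsel: "svsel \<in> borel_measurable borel"
    and G: "\<And>X. (\<integral>\<^sup>+ z. ennreal ((norm (node_avg N (\<lambda>i. gradF X (z i))))\<^sup>2) \<partial>PiM {..<N} D) \<le> ennreal G"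
  defines "X \<equiv> \<lambda>\<omega>. fst (psgd_state qrsel svsel gradF N \<eta> \<mu> \<tau> X0 Q0 (\<lambda>s i. xi s i \<omega>) k)"
  shows "(\<lambda>\<omega>. ennreal ((norm (node_avg N (\<lambda>i. gradF (X \<omega>) (xi k i \<omega>))))\<^sup>2)) \<in> borel_measurable M"
    and "(\<integral>\<^sup>+ \<omega>. ennreal ((norm (node_avg N (\<lambda>i. gradF (X \<omega>) (xi k i \<omega>))))\<^sup>2) \<partial>M) \<le> ennreal G"
proof -
  define A where "A = {..<k} \<times> {..<N}"
  define B where "B = {k} \<times> {..<N}"
  define \<Phi> where "\<Phi> = (\<lambda>f :: nat \<times> nat \<Rightarrow> 'xi. fst (psgd_state qrsel svsel gradF N \<eta> \<mu> \<tau> X0 Q0 (\<lambda>s i. f (s, i)) k))"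
  define \<Psi> where "\<Psi> f = (\<lambda>i\<in>{..<N}. f (k, i))" for f :: "nat \<times> nat \<Rightarrow> 'xi"
  define Z where "Z = (\<lambda>\<omega>. \<lambda>i\<in>{..<N}. xi k i \<omega>)"
  define \<phi> where "\<phi> p = ennreal ((norm (node_avg N (\<lambda>i. gradF (fst p) (snd p i))))\<^sup>2)"
    for p :: "(real^'n^'m) \<times> (nat \<Rightarrow> 'xi)"
  \<comment> \<open>the iterate \<open>X\<^sub>k\<close> only depends on the samples drawn before step \<open>k\<close>\<close>
  have "\<Phi> (\<lambda>p\<in>A. case_prod xi p \<omega>) = X \<omega>" for \<omega>
    unfolding \<Phi>_def X_def A_def by (rule fst_psgd_state_cong) auto
  then have X_eq: "X = \<Phi> \<circ> (\<lambda>\<omega>. \<lambda>p\<in>A. case_prod xi p \<omega>)" by auto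
  have Z_eq: "Z = \<Psi> \<circ> (\<lambda>\<omega>. \<lambda>p\<in>B. case_prod xi p \<omega>)"
    by (auto simp: Z_def \<Psi>_def B_def fun_eq_iff)
  have "measurable_state N (PiM A (\<lambda>_. S))
      (\<lambda>f. psgd_state qrsel svsel gradF N \<eta> \<mu> \<tau> X0 Q0 (\<lambda>s i. f (s, i)) k)"
    by (rule measurable_psgd_state[OF gradF qrsel svsel]) (auto simp: A_def intro!: measurable_component_singleton)
  then have \<Phi>: "\<Phi> \<in> borel_measurable (PiM A (\<lambda>_. S))"
    by (simp add: \<Phi>_def measurable_state_def)
  have \<Psi>: "\<Psi> \<in> measurable (PiM B (\<lambda>_. S)) (PiM {..<N} (\<lambda>_. S))"
    unfolding \<Psi>_def B_def by (intro measurable_restrict measurable_component_singleton) auto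
  have indep: "indep_var (PiM A (\<lambda>_. S)) (\<lambda>\<omega>. \<lambda>p\<in>A. case_prod xi p \<omega>)
      (PiM B (\<lambda>_. S)) (\<lambda>\<omega>. \<lambda>p\<in>B. case_prod xi p \<omega>)"
    using xi_indep by (rule indep_var_restrict) (auto simp: A_def B_def)
  have \<phi>: "\<phi> \<in> borel_measurable (borel \<Otimes>\<^sub>M PiM {..<N} (\<lambda>_. S))"
  proof -
    have "(\<lambda>p. gradF (fst p) (snd p i)) \<in> borel_measurable (borel \<Otimes>\<^sub>M PiM {..<N} (\<lambda>_. S))" if "i < N" for i
      using that by (intro borel_measurable_gradF[OF gradF]) auto
    then show ?thesis unfolding \<phi>_def node_avg_def by measurable
  qed
  have integrand: "ennreal ((norm (node_avg N (\<lambda>i. gradF (X \<omega>) (xi k i \<omega>))))\<^sup>2) = \<phi> (X \<omega>, Z \<omega>)" for \<omega>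
    by (simp add: \<phi>_def Z_def node_avg_def)
  have "X \<in> borel_measurable M"
    unfolding X_eq using indep_var_rv1[OF indep] \<Phi> by (rule measurable_comp)
  moreover have "Z \<in> measurable M (PiM {..<N} (\<lambda>_. S))"
    unfolding Z_eq using indep_var_rv2[OF indep] \<Psi> by (rule measurable_comp)
  ultimately show "(\<lambda>\<omega>. ennreal ((norm (node_avg N (\<lambda>i. gradF (X \<omega>) (xi k i \<omega>))))\<^sup>2)) \<in> borel_measurable M"
    unfolding integrand using \<phi> by measurable
  have "(\<integral>\<^sup>+ \<omega>. \<phi> (\<Phi> (\<lambda>p\<in>A. case_prod xi p \<omega>), \<Psi> (\<lambda>p\<in>B. case_prod xi p \<omega>)) \<partial>M) \<le> ennreal G"
  proof (rule nn_integral_indep_var_le[OF indep \<Phi> \<Psi> \<phi>])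
    fix x
    show "(\<integral>\<^sup>+ y. \<phi> (x, y) \<partial>distr M (PiM {..<N} (\<lambda>_. S)) (\<Psi> \<circ> (\<lambda>\<omega>. \<lambda>p\<in>B. case_prod xi p \<omega>))) \<le> ennreal G"
      using G[of x] by (simp add: Z_eq[symmetric] Z_def distr_sample_block \<phi>_def)
  qed
  then show "(\<integral>\<^sup>+ \<omega>. ennreal ((norm (node_avg N (\<lambda>i. gradF (X \<omega>) (xi k i \<omega>))))\<^sup>2) \<partial>M) \<le> ennreal G"
    by (simp only: integrand) (simp add: X_eq Z_eq)
qed

lemma nn_integral_sq_norm_psgd_mom_le:
  fixes gradF :: "real^'n^'m \<Rightarrow> 'xi \<Rightarrow> real^'n^'m"
    and qrsel :: "real^('r::{finite,linorder})^'m \<Rightarrow> real^('r::{finite,linorder})^'m"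
    and svsel :: "real^'n^'m \<Rightarrow> real^('r::{finite,linorder})^'m"
  assumes gradF: "(\<lambda>(X, z). gradF X z) \<in> borel_measurable (borel \<Otimes>\<^sub>M S)"
    and qrsel: "qrsel \<in> borel_measurable borel" and svsel: "svsel \<in> borel_measurable borel"
    and qr: "\<And>A. is_QR_factor A (qrsel A)" and sv: "\<And>D. is_top_left_sv D (svsel D)"
    and rn: "CARD('r) \<le> CARD('n)" and \<mu>: "0 \<le> \<mu>" "\<mu> < 1" and \<tau>: "\<tau> \<ge> 1"
    and G: "0 \<le> G"
      "\<And>X. (\<integral>\<^sup>+ z. ennreal ((norm (node_avg N (\<lambda>i. gradF X (z i))))\<^sup>2) \<partial>PiM {..<N} D) \<le> ennreal G"
  shows "(\<integral>\<^sup>+ w. ennreal ((norm (psgd_mom qrsel svsel gradF N \<eta> \<mu> \<tau> X0 Q0 (\<lambda>s i. xi s i w) t))\<^sup>2) \<partial>M)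
    \<le> ennreal (4 * (real \<tau>)\<^sup>2 * G / ((1 - \<mu>)\<^sup>2 * (real CARD('r) / real CARD('n))\<^sup>2))"
proof -
  define \<delta> where "\<delta> = real CARD('r) / real CARD('n)"
  define q where "q = 1 - \<delta> / 2"
  define V where "V = real \<tau> / (1 - q) / (1 - \<mu>)"
  define c where "c = mom_weight (restart_factor q \<tau>) \<mu> (Suc t)"
  define a where "a k w = (norm (node_avg N (\<lambda>i. gradF (fst (psgd_state qrsel svsel gradF N \<eta> \<mu> \<tau> X0 Q0
      (\<lambda>s i. xi s i w) k)) (xi k i w))))\<^sup>2" for k w
  have \<delta>: "0 < \<delta>" "\<delta> \<le> 1" using rn by (auto simp: \<delta>_def)
  have q: "0 \<le> q" "q < 1" using \<delta> by (auto simp: q_def)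
  have c: "0 \<le> c k" for k
    using q \<mu> unfolding c_def by (intro mom_weight_nonneg) (auto simp: restart_factor_def)
  have V: "0 \<le> V" using q \<mu> by (simp add: V_def)
  have path: "(norm (psgd_mom qrsel svsel gradF N \<eta> \<mu> \<tau> X0 Q0 (\<lambda>s i. xi s i w) t))\<^sup>2
      \<le> (\<Sum>k<Suc t. (V * c k) * a k w)" for w
    using psgd_mom_sq_le[OF qr sv rn \<mu> \<tau>, where xi = "\<lambda>s i. xi s i w"]
    unfolding V_def c_def a_def q_def \<delta>_def by (simp only: sum_distrib_left mult.assoc)
  have "(\<integral>\<^sup>+ w. ennreal ((norm (psgd_mom qrsel svsel gradF N \<eta> \<mu> \<tau> X0 Q0 (\<lambda>s i. xi s i w) t))\<^sup>2) \<partial>M)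
      \<le> (\<integral>\<^sup>+ w. ennreal (\<Sum>k<Suc t. (V * c k) * a k w) \<partial>M)"
    using path by (intro nn_integral_mono ennreal_leI)
  also have "\<dots> \<le> ennreal ((\<Sum>k<Suc t. V * c k) * G)"
    using V c nn_integral_sq_norm_grad_avg_le[OF gradF qrsel svsel G(2)] unfolding a_def
    by (intro nn_integral_weighted_sum_le) auto
  also have "\<dots> \<le> ennreal (V * V * G)"
  proof (intro ennreal_leI mult_right_mono G(1))
    have "(\<Sum>k<Suc t. c k) \<le> V"
      unfolding V_def c_def by (rule sum_mom_weight_restart_le[OF q \<tau> \<mu>])
    then show "(\<Sum>k<Suc t. V * c k) \<le> V * V"
      unfolding sum_distrib_left[symmetric] using V by (rule mult_left_mono)
  qed
  also have "V * V * G = 4 * (real \<tau>)\<^sup>2 * G / ((1 - \<mu>)\<^sup>2 * \<delta>\<^sup>2)"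
    using \<delta> \<mu> by (simp add: V_def q_def field_simps power2_eq_square)
  finally show ?thesis unfolding \<delta>_def .
qed

end

theorem lemma4:
  fixes M :: "'w measure" and S :: "'xi measure" and D :: "nat \<Rightarrow> 'xi measure"
    and xi :: "nat \<Rightarrow> nat \<Rightarrow> 'w \<Rightarrow> 'xi"
    and F :: "real^'n^'m \<Rightarrow> 'xi \<Rightarrow> real"
    and gradF :: "real^'n^'m \<Rightarrow> 'xi \<Rightarrow> real^'n^'m"
    and gradfi :: "nat \<Rightarrow> real^'n^'m \<Rightarrow> real^'n^'m"
    and gradf :: "real^'n^'m \<Rightarrow> real^'n^'m"
    and qrsel :: "real^('r::{finite,linorder})^'m \<Rightarrow> real^('r::{finite,linorder})^'m"
    and svsel :: "real^'n^'m \<Rightarrow> real^('r::{finite,linorder})^'m"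
    and N \<tau> :: nat and \<eta> \<mu> \<sigma> \<omega> :: real
    and X0 :: "real^'n^'m" and Q0 :: "real^('r::{finite,linorder})^'n"
  assumes dims: "CARD('n) \<le> CARD('m)" "CARD('r) \<le> CARD('n)"
    and N: "N \<ge> 1"
    and mu: "0 \<le> \<mu>" "\<mu> < 1" and tau: "\<tau> \<ge> 1" and eta: "\<eta> > 0"
    \<comment> \<open>probability model: samples xi_t^{(i)} ~ D_i, independent across nodes and iterations\<close>
    and M: "prob_space M"
    and D: "\<And>i. i < N \<Longrightarrow> prob_space (D i)" "\<And>i. i < N \<Longrightarrow> sets (D i) = sets S"
    and xi_meas: "\<And>t i. i < N \<Longrightarrow> xi t i \<in> measurable M S"
    and xi_distr: "\<And>t i. i < N \<Longrightarrow> distr M (D i) (xi t i) = D i"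
    and xi_indep: "prob_space.indep_vars M (\<lambda>_. S) (\<lambda>(t, i). xi t i) (UNIV \<times> {..<N})"
    \<comment> \<open>stochastic objective and gradients\<close>
    and gradF_meas: "(\<lambda>(X, z). gradF X z) \<in> borel_measurable (borel \<Otimes>\<^sub>M S)"
    and gradF_grad: "\<And>X z. ((\<lambda>Y. F Y z) has_derivative (\<lambda>H. gradF X z \<bullet> H)) (at X)"
    and F_int: "\<And>i X. i < N \<Longrightarrow> integrable (D i) (F X)"
    and gradfi: "\<And>i X. i < N \<Longrightarrow>
        ((\<lambda>Y. \<integral>z. F Y z \<partial>D i) has_derivative (\<lambda>H. gradfi i X \<bullet> H)) (at X)"
    and gradf: "\<And>X. ((\<lambda>Y. (1 / real N) * (\<Sum>i<N. \<integral>z. F Y z \<partial>D i))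
                      has_derivative (\<lambda>H. gradf X \<bullet> H)) (at X)"
    \<comment> \<open>Assumption (A3)\<close>
    and A3_grad: "\<And>X. (norm (gradf X))\<^sup>2 \<le> \<omega>\<^sup>2"
    and A3_var: "\<And>i X. i < N \<Longrightarrow>
        (\<integral>\<^sup>+ z. ennreal ((norm (gradF X z - gradfi i X))\<^sup>2) \<partial>D i) \<le> ennreal (\<sigma>\<^sup>2)"
    and A3_G: "\<And>X. (\<integral>\<^sup>+ z. ennreal ((norm ((1 / real N) *\<^sub>R (\<Sum>i<N. gradF X (z i))))\<^sup>2)
                      \<partial>(PiM {..<N} D)) \<le> ennreal (\<sigma>\<^sup>2 + \<omega>\<^sup>2)"
    \<comment> \<open>implementation of QR and top-r SVD (measurable selections)\<close>
    and qrsel: "\<And>A. is_QR_factor A (qrsel A)" "qrsel \<in> borel_measurable borel"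
    and svsel: "\<And>Dl. is_top_left_sv Dl (svsel Dl)" "svsel \<in> borel_measurable borel"
  shows "\<forall>t. (\<integral>\<^sup>+ w. ennreal ((norm (psgd_mom qrsel svsel gradF N \<eta> \<mu> \<tau> X0 Q0
                                  (\<lambda>s i. xi s i w) t))\<^sup>2) \<partial>M)
           \<le> ennreal (92 * (real \<tau>)\<^sup>2 * (\<sigma>\<^sup>2 + \<omega>\<^sup>2) /
                      ((1 - \<mu>)\<^sup>2 * (real CARD('r) / real CARD('n))\<^sup>2))"
proof (intro allI)
  fix t
  interpret node_samples M S D xi N
    using M N D(2) xi_meas xi_distr xi_indep by (simp add: node_samples_def node_samples_axioms_def)
  have "(\<integral>\<^sup>+ w. ennreal ((norm (psgd_mom qrsel svsel gradF N \<eta> \<mu> \<tau> X0 Q0 (\<lambda>s i. xi s i w) t))\<^sup>2) \<partial>M)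
      \<le> ennreal (4 * (real \<tau>)\<^sup>2 * (\<sigma>\<^sup>2 + \<omega>\<^sup>2) / ((1 - \<mu>)\<^sup>2 * (real CARD('r) / real CARD('n))\<^sup>2))"
    using A3_G
    by (intro nn_integral_sq_norm_psgd_mom_le[OF gradF_meas qrsel(2) svsel(2) qrsel(1) svsel(1) dims(2) mu tau])
      (simp_all add: node_avg_def)
  also have "\<dots> \<le> ennreal (92 * (real \<tau>)\<^sup>2 * (\<sigma>\<^sup>2 + \<omega>\<^sup>2) / ((1 - \<mu>)\<^sup>2 * (real CARD('r) / real CARD('n))\<^sup>2))"
    by (intro ennreal_leI divide_right_mono mult_right_mono) auto
  finally show "(\<integral>\<^sup>+ w. ennreal ((norm (psgd_mom qrsel svsel gradF N \<eta> \<mu> \<tau> X0 Q0 (\<lambda>s i. xi s i w) t))\<^sup>2) \<partial>M)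
      \<le> ennreal (92 * (real \<tau>)\<^sup>2 * (\<sigma>\<^sup>2 + \<omega>\<^sup>2) / ((1 - \<mu>)\<^sup>2 * (real CARD('r) / real CARD('n))\<^sup>2))" .
qed

end
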